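(* Let $S\subset\mathbb{R}^n$ be a real algebraic variety given as the common zero set of $m$ real polynomials $F_1,\dots,F_m$ in unknowns $x_1,\dots,x_n$, such that every point $(x_1,\dots,x_n)\in S$ satisfies $0<x_i$ for $i=1,\dots,n$ and $\sum_{i=1}^n x_i<1$. Suppose the highest power of $x_i$ occurring in $F_j$ is $x_i^{d_{ij}}$, and set $$D'=\sum_{i=1}^n\max_{1\le j\le m}d_{ij}.$$ Then there is a game with $D'+m$ players, each of whom has $2$ pure strategies, whose set of totally mixed Nash equilibria is stably isomorphic to $S$.
   Context: A real algebraic variety is the set of common real zeros in $\mathbb{R}^n$ of finitely many real polynomials. Two semialgebraic sets are semialgebraically isomorphic if there is a homeomorphism between them whose graph is semialgebraic; they are stably isomorphic if they are equivalent under the equivalence relation generated by semialgebraic isomorphisms and the canonical projections $W\times\mathbb{R}^k\to W$. A finite normal form game consists of players $I=\{1,\dots,N\}$, finite pure strategy sets $S_i=\{s_{i0},\dots,s_{id_i}\}$, and payoffs $u_i:\prod_i S_i\to\mathbb{R}$. A mixed strategy of player $i$ is a probability vector $\sigma_i$ on $S_i$; expected payoffs are multilinear: $u_i(\sigma)=\sum_{s}u_i(s)\prod_k\sigma_k(s_k)$, and $u_i(s_{ij},\sigma_{-i})$ denotes player $i$'s expected payoff when $i$ plays $s_{ij}$ and the others play according to $\sigma$. A profile $\sigma$ is a totally mixed Nash equilibrium if $0<\sigma_i(s_{ij})<1$ for all $i,j$ and $u_i(s_{ij},\sigma_{-i})=u_i(s_{i0},\sigma_{-i})$ for all $i$ and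 $j=1,\dots,d_i$. When every player has two pure strategies, the set of totally mixed Nash equilibria is regarded as a subset of $\mathbb{R}^N$ via the coordinates $p_i=\sigma_i(s_{i1})$. *)

theory Defs
  imports Complex_Main "HOL-Library.FuncSet"
begin

text \<open>A real polynomial is represented by its coefficient function on exponent
vectors (monomial x_0^(a 0) * x_1^(a 1) * ... has coefficient c a).
Points of R^n are real lists of length n; variable x_(i+1) of the paper is list index i.\<close>

type_synonym mpoly = "(nat \<Rightarrow> nat) \<Rightarrow> real"

definition is_poly :: "nat \<Rightarrow> mpoly \<Rightarrow> bool" where
  "is_poly n c \<longleftrightarrow> finite {a. c a \<noteq> 0} \<and> (\<forall>a. c a \<noteq> 0 \<longrightarrow> (\<forall>i\<ge>n. a i = 0))"

definition peval :: "mpoly \<Rightarrow> real list \<Rightarrow> real" where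
  "peval c x = (\<Sum>a\<in>{a. c a \<noteq> 0}. c a * (\<Prod>i<length x. (x ! i) ^ (a i)))"

definition deg_in :: "mpoly \<Rightarrow> nat \<Rightarrow> nat" where
  "deg_in c i = Max (insert 0 {a i | a. c a \<noteq> 0})"

definition zero_set :: "nat \<Rightarrow> nat \<Rightarrow> (nat \<Rightarrow> mpoly) \<Rightarrow> real list set" where
  "zero_set n m F = {x. length x = n \<and> (\<forall>j<m. peval (F j) x = 0)}"

inductive_set semialg :: "nat \<Rightarrow> real list set set" for n :: nat where
  sa_eq: "is_poly n p \<Longrightarrow> {x. length x = n \<and> peval p x = 0} \<in> semialg n"
| sa_gt: "is_poly n p \<Longrightarrow> {x. length x = n \<and> peval p x > 0} \<in> semialg n"
| sa_un: "A \<in> semialg n \<Longrightarrow> B \<in> semialg n \<Longrightarrow> A \<union> B \<in> semialg n"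
| sa_compl: "A \<in> semialg n \<Longrightarrow> {x. length x = n} - A \<in> semialg n"

definition ldist :: "real list \<Rightarrow> real list \<Rightarrow> real" where
  "ldist x y = sqrt (\<Sum>i<length x. (x ! i - y ! i)\<^sup>2)"

definition lcont_on :: "real list set \<Rightarrow> (real list \<Rightarrow> real list) \<Rightarrow> bool" where
  "lcont_on A f \<longleftrightarrow> (\<forall>x\<in>A. \<forall>e>0. \<exists>d>0. \<forall>y\<in>A. ldist x y < d \<longrightarrow> ldist (f x) (f y) < e)"

definition semialg_iso :: "nat \<Rightarrow> real list set \<Rightarrow> nat \<Rightarrow> real list set \<Rightarrow> bool" where
  "semialg_iso n A m B \<longleftrightarrow>
     A \<subseteq> {x. length x = n} \<and> B \<subseteq> {y. length y = m} \<and>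
     (\<exists>f. bij_betw f A B \<and> lcont_on A f \<and> lcont_on B (inv_into A f) \<and>
          {x @ f x | x. x \<in> A} \<in> semialg (n + m))"

inductive stably_iso :: "nat \<times> real list set \<Rightarrow> nat \<times> real list set \<Rightarrow> bool" where
  si_iso: "semialg_iso n A m B \<Longrightarrow> stably_iso (n, A) (m, B)"
| si_proj: "A \<in> semialg n \<Longrightarrow>
     stably_iso (n + k, {x @ y | x y. x \<in> A \<and> length y = k}) (n, A)"
| si_sym: "stably_iso P Q \<Longrightarrow> stably_iso Q P"
| si_trans: "stably_iso P Q \<Longrightarrow> stably_iso Q R \<Longrightarrow> stably_iso P R"

text \<open>Players are 0..N-1; a pure profile is s \<in> PiE {0..<N} (%_. {0,1});
payoff u i s of player i. A mixed profile is p (list of length N), p!k = prob. that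
player k plays strategy 1.\<close>

definition pure_profiles :: "nat \<Rightarrow> (nat \<Rightarrow> nat) set" where
  "pure_profiles N = PiE {..<N} (\<lambda>_. {0, 1})"

definition exp_payoff ::
  "nat \<Rightarrow> (nat \<Rightarrow> (nat \<Rightarrow> nat) \<Rightarrow> real) \<Rightarrow> nat \<Rightarrow> nat \<Rightarrow> real list \<Rightarrow> real" where
  "exp_payoff N u i j p =
     (\<Sum>s\<in>{s\<in>pure_profiles N. s i = j}.
        u i s * (\<Prod>k\<in>{..<N} - {i}. (if s k = 1 then p ! k else 1 - p ! k)))"

definition tmne :: "nat \<Rightarrow> (nat \<Rightarrow> (nat \<Rightarrow> nat) \<Rightarrow> real) \<Rightarrow> real list set" where
  "tmne N u = {p. length p = N \<and> (\<forall>i<N. 0 < p ! i \<and> p ! i < 1) \<and>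
                  (\<forall>i<N. exp_payoff N u i 1 p = exp_payoff N u i 0 p)}"

end

theory Submission
  imports Defs "HOL-Analysis.L2_Norm"
begin

text \<open>
  In a game where every player has the strategies 0 and 1 and player \<open>q\<close> is paid \<open>\<phi>\<^sub>q(s)\<close>
  for strategy 1 and nothing for strategy 0, player \<open>q\<close> is indifferent exactly when the
  expectation of \<open>\<phi>\<^sub>q\<close> under the mixed strategies of the others vanishes. Taking for \<open>\<phi>\<^sub>q\<close>
  combinations of the indicators ``all players in \<open>K\<close> play 1'', \<open>q \<notin> K\<close>, this expectation can be
  any polynomial in the other players' probabilities that is affine in each of them.

  The variable \<open>x\<^sub>i\<close> is represented by a block of \<open>d\<^sub>i = max\<^sub>j d\<^sub>i\<^sub>j\<close> players. Players of the
  blocks force neighbouring members of a block to play alike, so that each block carries a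
  single value, and \<open>m\<close> further players impose the equations \<open>F\<^sub>j\<close>, the monomial \<open>x\<^sup>a\<close> being
  replaced by the product of the first \<open>a\<^sub>i\<close> players of every block \<open>i\<close>. The totally mixed
  equilibria are then the profiles whose block values form a point of \<open>S\<close>, all other players
  being free in \<open>(0, 1)\<close>. As \<open>(0, 1)\<close> is semialgebraically homeomorphic to the real line, this
  set is isomorphic to a product of \<open>S\<close> with a Euclidean space, which projects onto \<open>S\<close>.

  Since \<open>S\<close> is bounded, a nonempty \<open>S\<close> involves every variable, so no block is empty. If \<open>S\<close> is
  empty, a player with a dominant strategy rules out all equilibria; a single variable of degree
  two, whose block has no third member to tie its two players together, borrows the first
  equation player as a third copy.
\<close>

section \<open>Polynomial functions and semialgebraic sets\<close>

definition monom_eval :: "(nat \<Rightarrow> nat) \<Rightarrow> real list \<Rightarrow> real" where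
  "monom_eval a x = (\<Prod>i<length x. (x ! i) ^ (a i))"

lemma peval_eq_sum_monom_eval: "peval c x = (\<Sum>a\<in>{a. c a \<noteq> 0}. c a * monom_eval a x)"
  by (simp add: peval_def monom_eval_def)

lemma peval_eq_sum_superset:
  assumes "finite A" "{a. c a \<noteq> 0} \<subseteq> A"
  shows "peval c x = (\<Sum>a\<in>A. c a * monom_eval a x)"
  unfolding peval_eq_sum_monom_eval by (rule sum.mono_neutral_left) (use assms in auto)

lemma monom_eval_add: "monom_eval (\<lambda>i. a i + b i) x = monom_eval a x * monom_eval b x"
  by (simp add: monom_eval_def power_add prod.distrib)

lemma peval_list_update_absent:
  assumes "\<And>a. c a \<noteq> 0 \<Longrightarrow> a i = 0"
  shows "peval c (x[i := v]) = peval c x"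
proof -
  have "(x[i := v] ! j) ^ a j = (x ! j) ^ a j" if "c a \<noteq> 0" for a j
    using assms[OF that] by (cases "j = i") auto
  then have "monom_eval a (x[i := v]) = monom_eval a x" if "c a \<noteq> 0" for a
    using that by (simp add: monom_eval_def)
  then show ?thesis by (simp add: peval_eq_sum_monom_eval)
qed

definition poly_fun :: "nat \<Rightarrow> (real list \<Rightarrow> real) \<Rightarrow> bool" where
  "poly_fun n f \<longleftrightarrow> (\<exists>c. is_poly n c \<and> (\<forall>x. length x = n \<longrightarrow> peval c x = f x))"

lemma poly_fun_cong: "poly_fun n f \<Longrightarrow> (\<And>x. length x = n \<Longrightarrow> f x = g x) \<Longrightarrow> poly_fun n g"
  unfolding poly_fun_def by auto

lemma poly_fun_monom:
  assumes "\<And>i. n \<le> i \<Longrightarrow> a i = 0"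
  shows "poly_fun n (\<lambda>x. r * monom_eval a x)"
proof -
  define c :: mpoly where "c b = (if b = a then r else 0)" for b
  have supp: "{b. c b \<noteq> 0} \<subseteq> {a}" by (auto simp: c_def)
  have "is_poly n c"
    unfolding is_poly_def using finite_subset[OF supp] assms by (auto simp: c_def)
  moreover have "peval c x = r * monom_eval a x" for x
    by (subst peval_eq_sum_superset[OF _ supp]) (auto simp: c_def)
  ultimately show ?thesis unfolding poly_fun_def by blast
qed

lemma poly_fun_const: "poly_fun n (\<lambda>x. r)"
  using poly_fun_monom[of n "\<lambda>_. 0" r] by (simp add: monom_eval_def)

lemma poly_fun_nth:
  assumes "i < n"
  shows "poly_fun n (\<lambda>x. x ! i)"
proof (rule poly_fun_cong)
  show "poly_fun n (\<lambda>x. 1 * monom_eval (\<lambda>j. if j = i then 1 else 0) x)"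
    using assms by (intro poly_fun_monom) auto
  show "1 * monom_eval (\<lambda>j. if j = i then 1 else 0) x = x ! i" if "length x = n" for x
  proof -
    have "(x ! j) ^ (if j = i then 1 else 0) = (if j = i then x ! j else 1)" for j
      by simp
    then show ?thesis using that assms by (simp add: monom_eval_def prod.delta)
  qed
qed

lemma poly_fun_add:
  assumes "poly_fun n f" "poly_fun n g"
  shows "poly_fun n (\<lambda>x. f x + g x)"
proof -
  obtain c where c: "is_poly n c" "\<And>x. length x = n \<Longrightarrow> peval c x = f x"
    using assms(1) by (auto simp: poly_fun_def)
  obtain d where d: "is_poly n d" "\<And>x. length x = n \<Longrightarrow> peval d x = g x"
    using assms(2) by (auto simp: poly_fun_def)
  define A where "A = {a. c a \<noteq> 0} \<union> {a. d a \<noteq> 0}"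
  have A: "finite A" using c(1) d(1) by (auto simp: A_def is_poly_def)
  have "is_poly n (\<lambda>a. c a + d a)"
    unfolding is_poly_def
  proof
    show "finite {a. c a + d a \<noteq> 0}" by (rule finite_subset[OF _ A]) (auto simp: A_def)
    show "\<forall>a. c a + d a \<noteq> 0 \<longrightarrow> (\<forall>i\<ge>n. a i = 0)"
      using c(1) d(1) unfolding is_poly_def by (metis add.right_neutral add_0)
  qed
  moreover have "peval (\<lambda>a. c a + d a) x = peval c x + peval d x" for x
    using A by (subst (1 2 3) peval_eq_sum_superset[of A])
      (auto simp: A_def distrib_right sum.distrib)
  ultimately show ?thesis using c(2) d(2) unfolding poly_fun_def by auto
qed

definition mpoly_mult :: "mpoly \<Rightarrow> mpoly \<Rightarrow> mpoly" where
  "mpoly_mult c d e = (\<Sum>q\<in>{q\<in>{a. c a \<noteq> 0} \<times> {b. d b \<noteq> 0}. (\<lambda>i. fst q i + snd q i) = e}.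
     c (fst q) * d (snd q))"

lemma mpoly_mult_support:
  "{e. mpoly_mult c d e \<noteq> 0} \<subseteq> (\<lambda>q i. fst q i + snd q i) ` ({a. c a \<noteq> 0} \<times> {b. d b \<noteq> 0})"
proof
  fix e assume "e \<in> {e. mpoly_mult c d e \<noteq> 0}"
  then have "{q\<in>{a. c a \<noteq> 0} \<times> {b. d b \<noteq> 0}. (\<lambda>i. fst q i + snd q i) = e} \<noteq> {}"
    by (auto simp only: mpoly_mult_def sum.empty)
  then show "e \<in> (\<lambda>q i. fst q i + snd q i) ` ({a. c a \<noteq> 0} \<times> {b. d b \<noteq> 0})" by blast
qed

lemma is_poly_mpoly_mult:
  assumes c: "is_poly n c" and d: "is_poly n d"
  shows "is_poly n (mpoly_mult c d)"
  unfolding is_poly_def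
proof
  have "finite ({a. c a \<noteq> 0} \<times> {b. d b \<noteq> 0})" using c d by (simp add: is_poly_def)
  then show "finite {e. mpoly_mult c d e \<noteq> 0}" by (rule finite_surj[OF _ mpoly_mult_support])
  show "\<forall>e. mpoly_mult c d e \<noteq> 0 \<longrightarrow> (\<forall>i\<ge>n. e i = 0)"
  proof (intro allI impI)
    fix e i assume "mpoly_mult c d e \<noteq> 0" "n \<le> i"
    then obtain q where "q \<in> {a. c a \<noteq> 0} \<times> {b. d b \<noteq> 0}" "e = (\<lambda>i. fst q i + snd q i)"
      using mpoly_mult_support[of c d] by blast
    then show "e i = 0" using c d \<open>n \<le> i\<close> by (cases q) (auto simp: is_poly_def)
  qed
qed

lemma peval_mpoly_mult:
  assumes "finite {a. c a \<noteq> 0}" "finite {b. d b \<noteq> 0}"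
  shows "peval (mpoly_mult c d) x = peval c x * peval d x"
proof -
  define P where "P = {a. c a \<noteq> 0} \<times> {b. d b \<noteq> 0}"
  define plus :: "(nat \<Rightarrow> nat) \<times> (nat \<Rightarrow> nat) \<Rightarrow> nat \<Rightarrow> nat"
    where "plus q i = fst q i + snd q i" for q i
  have P: "finite P" using assms by (simp add: P_def)
  have supp: "{e. mpoly_mult c d e \<noteq> 0} \<subseteq> plus ` P"
    using mpoly_mult_support unfolding P_def plus_def[abs_def] .
  have fibre: "mpoly_mult c d e * monom_eval e x
      = (\<Sum>q\<in>{q\<in>P. plus q = e}. c (fst q) * d (snd q) * monom_eval (plus q) x)" for e
    unfolding mpoly_mult_def P_def plus_def[abs_def] sum_distrib_right by (rule sum.cong) auto
  have "peval (mpoly_mult c d) x = (\<Sum>e\<in>plus ` P. mpoly_mult c d e * monom_eval e x)"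
    using P supp by (intro peval_eq_sum_superset) auto
  also have "\<dots> = (\<Sum>q\<in>P. c (fst q) * d (snd q) * monom_eval (plus q) x)"
    unfolding fibre by (rule sum.image_gen[OF P, symmetric])
  also have "\<dots> = (\<Sum>q\<in>P. (c (fst q) * monom_eval (fst q) x) * (d (snd q) * monom_eval (snd q) x))"
    by (rule sum.cong) (auto simp: plus_def[abs_def] monom_eval_add)
  also have "\<dots> = peval c x * peval d x"
    by (simp add: P_def peval_eq_sum_monom_eval sum_product sum.cartesian_product case_prod_beta)
  finally show ?thesis .
qed

lemma poly_fun_mult:
  assumes "poly_fun n f" "poly_fun n g"
  shows "poly_fun n (\<lambda>x. f x * g x)"
proof -
  obtain c where c: "is_poly n c" "\<And>x. length x = n \<Longrightarrow> peval c x = f x"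
    using assms(1) by (auto simp: poly_fun_def)
  obtain d where d: "is_poly n d" "\<And>x. length x = n \<Longrightarrow> peval d x = g x"
    using assms(2) by (auto simp: poly_fun_def)
  have "peval (mpoly_mult c d) x = peval c x * peval d x" for x
    using c(1) d(1) by (intro peval_mpoly_mult) (simp_all add: is_poly_def)
  then show ?thesis
    using is_poly_mpoly_mult[OF c(1) d(1)] c(2) d(2) unfolding poly_fun_def by auto
qed

lemma poly_fun_diff:
  assumes "poly_fun n f" "poly_fun n g"
  shows "poly_fun n (\<lambda>x. f x - g x)"
  using poly_fun_add[OF assms(1) poly_fun_mult[OF poly_fun_const assms(2)], of "-1"] by simp

lemma poly_fun_sum:
  "finite A \<Longrightarrow> (\<And>a. a \<in> A \<Longrightarrow> poly_fun n (f a)) \<Longrightarrow> poly_fun n (\<lambda>x. \<Sum>a\<in>A. f a x)"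
  by (induction A rule: finite_induct) (auto intro: poly_fun_add poly_fun_const)

lemma poly_fun_prod:
  "finite A \<Longrightarrow> (\<And>a. a \<in> A \<Longrightarrow> poly_fun n (f a)) \<Longrightarrow> poly_fun n (\<lambda>x. \<Prod>a\<in>A. f a x)"
  by (induction A rule: finite_induct) (auto intro: poly_fun_mult poly_fun_const)

lemma poly_fun_power: "poly_fun n f \<Longrightarrow> poly_fun n (\<lambda>x. f x ^ k)"
  by (induction k) (auto intro: poly_fun_mult poly_fun_const)

lemma poly_fun_peval_take_drop:
  assumes "is_poly k c" "N + k \<le> n"
  shows "poly_fun n (\<lambda>z. peval c (take k (drop N z)))"
proof (rule poly_fun_cong)
  have "finite {a. c a \<noteq> 0}" using assms(1) by (simp add: is_poly_def)
  then show "poly_fun n (\<lambda>z. \<Sum>a\<in>{a. c a \<noteq> 0}. c a * (\<Prod>i<k. (z ! (N + i)) ^ (a i)))"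
    using assms(2) by (intro poly_fun_sum poly_fun_mult poly_fun_const poly_fun_prod
        poly_fun_power poly_fun_nth) auto
  show "(\<Sum>a\<in>{a. c a \<noteq> 0}. c a * (\<Prod>i<k. (z ! (N + i)) ^ (a i))) = peval c (take k (drop N z))"
    if "length z = n" for z
    using that assms(2) unfolding peval_def
    by (intro sum.cong refl arg_cong2[where f="(*)"] prod.cong) auto
qed

lemma semialg_subset: "A \<in> semialg n \<Longrightarrow> A \<subseteq> {x. length x = n}"
  by (induction rule: semialg.induct) auto

lemma semialg_poly_fun_eq0:
  assumes "poly_fun n f"
  shows "{x. length x = n \<and> f x = 0} \<in> semialg n"
proof -
  obtain c where c: "is_poly n c" "\<And>x. length x = n \<Longrightarrow> peval c x = f x"
    using assms by (auto simp: poly_fun_def)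
  have "{x. length x = n \<and> f x = 0} = {x. length x = n \<and> peval c x = 0}" using c(2) by auto
  then show ?thesis using sa_eq[OF c(1)] by simp
qed

lemma semialg_poly_fun_gt0:
  assumes "poly_fun n f"
  shows "{x. length x = n \<and> f x > 0} \<in> semialg n"
proof -
  obtain c where c: "is_poly n c" "\<And>x. length x = n \<Longrightarrow> peval c x = f x"
    using assms by (auto simp: poly_fun_def)
  have "{x. length x = n \<and> f x > 0} = {x. length x = n \<and> peval c x > 0}" using c(2) by auto
  then show ?thesis using sa_gt[OF c(1)] by simp
qed

lemma semialg_poly_fun_eq:
  "poly_fun n f \<Longrightarrow> poly_fun n g \<Longrightarrow> {x. length x = n \<and> f x = g x} \<in> semialg n"
  using semialg_poly_fun_eq0[OF poly_fun_diff, of n f g] by simp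

lemma semialg_poly_fun_less:
  "poly_fun n f \<Longrightarrow> poly_fun n g \<Longrightarrow> {x. length x = n \<and> f x < g x} \<in> semialg n"
  using semialg_poly_fun_gt0[OF poly_fun_diff, of n g f] by simp

lemma semialg_empty: "{} \<in> semialg n"
  using semialg_poly_fun_less[OF poly_fun_const poly_fun_const, of n 0 0] by simp

lemma semialg_univ: "{x. length x = n} \<in> semialg n"
  using sa_compl[OF semialg_empty] by simp

lemma semialg_Int:
  assumes "A \<in> semialg n" "B \<in> semialg n"
  shows "A \<inter> B \<in> semialg n"
proof -
  let ?U = "{x :: real list. length x = n}"
  have "A \<inter> B = ?U - ((?U - A) \<union> (?U - B))"
    using semialg_subset[OF assms(1)] semialg_subset[OF assms(2)] by auto
  then show ?thesis using assms by (auto intro!: sa_compl sa_un)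
qed

lemma semialg_conj:
  assumes "{x. length x = n \<and> P x} \<in> semialg n" "{x. length x = n \<and> Q x} \<in> semialg n"
  shows "{x. length x = n \<and> P x \<and> Q x} \<in> semialg n"
  using semialg_Int[OF assms] by (simp add: Collect_conj_eq[symmetric] conj_ac)

lemma semialg_all:
  assumes "\<And>k. k < (K :: nat) \<Longrightarrow> {x. length x = n \<and> P k x} \<in> semialg n"
  shows "{x. length x = n \<and> (\<forall>k<K. P k x)} \<in> semialg n"
  using assms
proof (induction K)
  case 0
  then show ?case using semialg_univ by simp
next
  case (Suc K)
  have "{x. length x = n \<and> (\<forall>k<Suc K. P k x)} = {x. length x = n \<and> (\<forall>k<K. P k x) \<and> P K x}"
    by (auto simp: less_Suc_eq)
  then show ?case using Suc by (simp add: semialg_conj)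
qed

lemma semialg_preimage_take_drop:
  assumes "A \<in> semialg k" "N + k \<le> n"
  shows "{z. length z = n \<and> take k (drop N z) \<in> A} \<in> semialg n"
  using assms(1)
proof (induction rule: semialg.induct)
  case (sa_eq p)
  have "{z. length z = n \<and> take k (drop N z) \<in> {x. length x = k \<and> peval p x = 0}}
      = {z. length z = n \<and> peval p (take k (drop N z)) = 0}"
    using assms(2) by auto
  then show ?case
    using semialg_poly_fun_eq0[OF poly_fun_peval_take_drop[OF sa_eq assms(2)]] by simp
next
  case (sa_gt p)
  have "{z. length z = n \<and> take k (drop N z) \<in> {x. length x = k \<and> peval p x > 0}}
      = {z. length z = n \<and> peval p (take k (drop N z)) > 0}"
    using assms(2) by auto
  then show ?case
    using semialg_poly_fun_gt0[OF poly_fun_peval_take_drop[OF sa_gt assms(2)]] by simp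
next
  case (sa_un A B)
  have "{z. length z = n \<and> take k (drop N z) \<in> A \<union> B}
      = {z. length z = n \<and> take k (drop N z) \<in> A} \<union> {z. length z = n \<and> take k (drop N z) \<in> B}"
    by auto
  then show ?case using sa_un by (simp add: semialg.sa_un)
next
  case (sa_compl A)
  have "{z. length z = n \<and> take k (drop N z) \<in> {x. length x = k} - A}
      = {z. length z = n} - {z. length z = n \<and> take k (drop N z) \<in> A}"
    using assms(2) by auto
  then show ?case using sa_compl by (simp add: semialg.sa_compl)
qed

lemma zero_set_semialg:
  assumes "\<forall>j<m. is_poly n (F j)"
  shows "zero_set n m F \<in> semialg n"
  unfolding zero_set_def by (rule semialg_all) (use assms sa_eq in auto)

section \<open>Continuity of maps between lists\<close>

lemma abs_nth_diff_le_ldist: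
  assumes "i < length x"
  shows "\<bar>x ! i - y ! i\<bar> \<le> ldist x y"
proof -
  have "(x ! i - y ! i)\<^sup>2 \<le> (\<Sum>j<length x. (x ! j - y ! j)\<^sup>2)"
    by (rule member_le_sum) (use assms in auto)
  then show ?thesis unfolding ldist_def using real_sqrt_le_mono by fastforce
qed

lemma ldist_le_sum_abs: "ldist x y \<le> (\<Sum>i<length x. \<bar>x ! i - y ! i\<bar>)"
  using L2_set_le_sum_abs[of "\<lambda>i. x ! i - y ! i" "{..<length x}"]
  by (simp add: ldist_def L2_set_def)

definition rcont_on :: "real list set \<Rightarrow> (real list \<Rightarrow> real) \<Rightarrow> bool" where
  "rcont_on A h \<longleftrightarrow> (\<forall>x\<in>A. \<forall>e>0. \<exists>d>0. \<forall>y\<in>A. ldist x y < d \<longrightarrow> \<bar>h x - h y\<bar> < e)"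

lemma lcont_on_componentwise:
  assumes len: "\<And>x. x \<in> A \<Longrightarrow> length (f x) = b"
    and comp: "\<And>k. k < b \<Longrightarrow> rcont_on A (\<lambda>x. f x ! k)"
  shows "lcont_on A f"
  unfolding lcont_on_def
proof (intro ballI allI impI)
  fix x and e :: real assume x: "x \<in> A" and e: "e > 0"
  define e' where "e' = e / (real b + 1)"
  have e': "e' > 0" using e by (simp add: e'_def)
  have "\<forall>k<b. \<exists>d>0. \<forall>y\<in>A. ldist x y < d \<longrightarrow> \<bar>f x ! k - f y ! k\<bar> < e'"
    using comp x e' unfolding rcont_on_def by blast
  then obtain D where D: "\<And>k. k < b \<Longrightarrow> D k > 0"
    and close: "\<And>k y. k < b \<Longrightarrow> y \<in> A \<Longrightarrow> ldist x y < D k \<Longrightarrow> \<bar>f x ! k - f y ! k\<bar> < e'"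
    by metis
  define d where "d = Min (insert 1 (D ` {..<b}))"
  have "d > 0" using D by (simp add: d_def)
  moreover have "ldist (f x) (f y) < e" if y: "y \<in> A" "ldist x y < d" for y
  proof -
    have "ldist (f x) (f y) \<le> (\<Sum>k<b. \<bar>f x ! k - f y ! k\<bar>)"
      using ldist_le_sum_abs len x by metis
    also have "\<dots> \<le> (\<Sum>k<b. e')"
    proof (rule sum_mono)
      fix k assume k: "k \<in> {..<b}"
      then have "d \<le> D k" by (simp add: d_def)
      then show "\<bar>f x ! k - f y ! k\<bar> \<le> e'" using close[of k y] k y by simp
    qed
    also have "\<dots> < e" using e by (simp add: e'_def field_simps)
    finally show ?thesis .
  qed
  ultimately show "\<exists>d>0. \<forall>y\<in>A. ldist x y < d \<longrightarrow> ldist (f x) (f y) < e" by blast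
qed

lemma rcont_on_nth:
  assumes "\<And>x. x \<in> A \<Longrightarrow> i < length x"
  shows "rcont_on A (\<lambda>x. x ! i)"
  unfolding rcont_on_def
proof (intro ballI allI impI exI conjI)
  fix x y and e :: real assume "x \<in> A" "e > 0" "y \<in> A" "ldist x y < e"
  then show "\<bar>x ! i - y ! i\<bar> < e" using abs_nth_diff_le_ldist[OF assms, of x y] by fastforce
qed

lemma rcont_on_compose_isCont:
  assumes "rcont_on A h" "\<And>x. x \<in> A \<Longrightarrow> isCont \<phi> (h x)"
  shows "rcont_on A (\<lambda>x. \<phi> (h x))"
  unfolding rcont_on_def
proof (intro ballI allI impI)
  fix x and e :: real assume x: "x \<in> A" and e: "e > 0"
  obtain s where s: "s > 0" "\<And>t. \<bar>t - h x\<bar> < s \<Longrightarrow> \<bar>\<phi> t - \<phi> (h x)\<bar> < e"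
  proof -
    obtain s where "s > 0" and s: "\<And>t. t \<noteq> h x \<and> norm (t - h x) < s \<Longrightarrow> norm (\<phi> t - \<phi> (h x)) < e"
      using assms(2)[OF x] e unfolding isCont_def LIM_eq by blast
    moreover have "\<bar>\<phi> t - \<phi> (h x)\<bar> < e" if "\<bar>t - h x\<bar> < s" for t
      using s[of t] that e by (cases "t = h x") auto
    ultimately show thesis using that by blast
  qed
  obtain d where d: "d > 0" "\<And>y. y \<in> A \<Longrightarrow> ldist x y < d \<Longrightarrow> \<bar>h x - h y\<bar> < s"
    using assms(1) x s(1) unfolding rcont_on_def by blast
  show "\<exists>d>0. \<forall>y\<in>A. ldist x y < d \<longrightarrow> \<bar>\<phi> (h x) - \<phi> (h y)\<bar> < e"
  proof (intro exI conjI ballI impI)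
    fix y assume "y \<in> A" "ldist x y < d"
    then have "\<bar>h y - h x\<bar> < s" using d(2) abs_minus_commute by metis
    then show "\<bar>\<phi> (h x) - \<phi> (h y)\<bar> < e" using s(2) abs_minus_commute by metis
  qed (rule d(1))
qed

section \<open>Copies of a semialgebraic set\<close>

text \<open>A semialgebraic homeomorphism from the open unit interval onto the real line: its
  graph is the curve \<open>y t (1 - t) = 2 t - 1\<close>, and \<open>real_to_unit y\<close> is the root of
  this quadratic in \<open>t\<close> that lies in \<open>(0, 1)\<close>.\<close>

definition unit_to_real :: "real \<Rightarrow> real" where
  "unit_to_real t = (2 * t - 1) / (t * (1 - t))"

definition real_to_unit :: "real \<Rightarrow> real" where
  "real_to_unit y = 2 / (2 - y + sqrt (y\<^sup>2 + 4))"

lemma real_to_unit_denom_gt_2: "2 - y + sqrt (y\<^sup>2 + 4) > 2"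
proof -
  have "\<bar>y\<bar> = sqrt (y\<^sup>2)" by simp
  also have "\<dots> < sqrt (y\<^sup>2 + 4)" by (rule real_sqrt_less_mono) simp
  finally show ?thesis by linarith
qed

lemma real_to_unit_gt_0: "0 < real_to_unit y"
  and real_to_unit_lt_1: "real_to_unit y < 1"
  using real_to_unit_denom_gt_2[of y] by (auto simp: real_to_unit_def)

lemma unit_to_real_eq_iff:
  assumes "0 < t" "t < 1"
  shows "unit_to_real t = y \<longleftrightarrow> y * (t * (1 - t)) = 2 * t - 1"
  using assms by (auto simp: unit_to_real_def field_simps)

lemma unit_to_real_real_to_unit: "unit_to_real (real_to_unit y) = y"
proof -
  define D where "D = 2 - y + sqrt (y\<^sup>2 + 4)"
  have D: "D > 2" using real_to_unit_denom_gt_2[of y] by (simp add: D_def)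
  have "(D - 2 + y)\<^sup>2 = y\<^sup>2 + 4" by (simp add: D_def)
  then have "(4 - D) * D = y * (2 * (D - 2))" by (simp add: algebra_simps power2_eq_square)
  then have "y * (2 / D * (1 - 2 / D)) = 2 * (2 / D) - 1"
    using D by (simp add: field_simps, algebra)
  then show ?thesis
    using real_to_unit_gt_0 real_to_unit_lt_1 unit_to_real_eq_iff
    by (simp add: real_to_unit_def D_def)
qed

lemma unit_to_real_inj:
  assumes "0 < s" "s < 1" "0 < t" "t < 1" "unit_to_real s = unit_to_real t"
  shows "s = t"
proof -
  have "(2 * s - 1) * (t * (1 - t)) = (2 * t - 1) * (s * (1 - s))"
    using assms by (simp add: unit_to_real_def field_simps)
  then have "(s - t) * ((1 - s) * (1 - t) + s * t) = 0" by (simp add: algebra_simps)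
  moreover have "(1 - s) * (1 - t) + s * t > 0" using assms by (simp add: add_pos_pos)
  ultimately show ?thesis by simp
qed

lemma real_to_unit_unit_to_real:
  assumes "0 < t" "t < 1"
  shows "real_to_unit (unit_to_real t) = t"
  using unit_to_real_inj[OF real_to_unit_gt_0 real_to_unit_lt_1 assms] unit_to_real_real_to_unit
  by simp

lemma isCont_unit_to_real: "0 < t \<Longrightarrow> t < 1 \<Longrightarrow> isCont unit_to_real t"
  unfolding unit_to_real_def[abs_def] by (intro continuous_intros) auto

lemma isCont_real_to_unit: "isCont real_to_unit y"
  using real_to_unit_denom_gt_2[of y]
  unfolding real_to_unit_def[abs_def] by (intro continuous_intros) auto

definition cylinder :: "real list set \<Rightarrow> nat \<Rightarrow> real list set" where
  "cylinder S k = {x @ y | x y. x \<in> S \<and> length y = k}"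

lemma stably_iso_cylinder: "S \<in> semialg n \<Longrightarrow> stably_iso (n + k, cylinder S k) (n, S)"
  unfolding cylinder_def by (rule si_proj)

definition copies :: "nat \<Rightarrow> nat \<Rightarrow> (nat \<Rightarrow> nat) \<Rightarrow> real list set \<Rightarrow> real list set" where
  "copies N M var S = {p. length p = N \<and> (\<exists>x\<in>S. \<forall>k<M. p ! k = x ! var k) \<and>
     (\<forall>k. M \<le> k \<and> k < N \<longrightarrow> 0 < p ! k \<and> p ! k < 1)}"

lemma copies_interior:
  assumes "\<forall>x\<in>S. \<forall>i<n. 0 < x ! i \<and> x ! i < 1" "\<And>k. k < M \<Longrightarrow> var k < n"
    and "p \<in> copies N M var S" "k < N"
  shows "0 < p ! k \<and> p ! k < 1"
  using assms by (cases "k < M") (auto simp: copies_def)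

locale copy_pattern =
  fixes N M n :: nat and var rep :: "nat \<Rightarrow> nat" and S :: "real list set"
  assumes M_le_N: "M \<le> N"
    and var_lt: "\<And>k. k < M \<Longrightarrow> var k < n"
    and rep_lt: "\<And>i. i < n \<Longrightarrow> rep i < M"
    and var_rep: "\<And>i. i < n \<Longrightarrow> var (rep i) = i"
    and S_lists: "S \<subseteq> {x. length x = n}"
begin

definition chart :: "real list \<Rightarrow> real list" where
  "chart p = map (\<lambda>i. p ! rep i) [0..<n] @ map (\<lambda>j. unit_to_real (p ! (M + j))) [0..<N - M]"

definition chart_inv :: "real list \<Rightarrow> real list" where
  "chart_inv z = map (\<lambda>k. z ! var k) [0..<M] @ map (\<lambda>j. real_to_unit (z ! (n + j))) [0..<N - M]"

lemma length_chart [simp]: "length (chart p) = n + (N - M)"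
  by (simp add: chart_def)

lemma length_chart_inv [simp]: "length (chart_inv z) = N"
  using M_le_N by (simp add: chart_inv_def)

lemma copiesE:
  assumes "p \<in> copies N M var S"
  obtains "length p = N" "take n (chart p) \<in> S" "\<And>k. k < M \<Longrightarrow> p ! k = take n (chart p) ! var k"
    "\<And>j. j < N - M \<Longrightarrow> 0 < p ! (M + j) \<and> p ! (M + j) < 1"
proof -
  obtain x where x: "x \<in> S" "\<And>k. k < M \<Longrightarrow> p ! k = x ! var k"
    using assms by (auto simp: copies_def)
  have "take n (chart p) = x"
    using x S_lists rep_lt var_rep by (intro nth_equalityI) (auto simp: chart_def nth_append)
  then show thesis using that assms x by (auto simp: copies_def)
qed

lemma chart_in_cylinder: "p \<in> copies N M var S \<Longrightarrow> chart p \<in> cylinder S (N - M)"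
proof (elim copiesE)
  assume "take n (chart p) \<in> S"
  moreover have "chart p = take n (chart p) @ drop n (chart p)" by simp
  moreover have "length (drop n (chart p)) = N - M" by simp
  ultimately show ?thesis unfolding cylinder_def by blast
qed

lemma chart_inv_in_copies:
  assumes "z \<in> cylinder S (N - M)"
  shows "chart_inv z \<in> copies N M var S"
proof -
  obtain x y where z: "z = x @ y" "x \<in> S" "length y = N - M"
    using assms by (auto simp: cylinder_def)
  have "length x = n" using z(2) S_lists by auto
  then show ?thesis
    using z var_lt M_le_N real_to_unit_gt_0 real_to_unit_lt_1
    by (auto simp: copies_def chart_inv_def nth_append intro!: bexI[of _ x])
qed

lemma chart_inv_chart: "p \<in> copies N M var S \<Longrightarrow> chart_inv (chart p) = p"
proof (elim copiesE)
  assume p: "length p = N" "\<And>k. k < M \<Longrightarrow> p ! k = take n (chart p) ! var k"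
    and unit: "\<And>j. j < N - M \<Longrightarrow> 0 < p ! (M + j) \<and> p ! (M + j) < 1"
  show "chart_inv (chart p) = p"
  proof (rule nth_equalityI)
    fix k assume "k < length (chart_inv (chart p))"
    then have k: "k < N" by simp
    show "chart_inv (chart p) ! k = p ! k"
    proof (cases "k < M")
      case True
      then show ?thesis using p(2)[of k] var_lt by (simp add: chart_inv_def nth_append)
    next
      case False
      define j where "j = k - M"
      have j: "k = M + j" "j < N - M" using False k by (auto simp: j_def)
      show ?thesis
        using unit[OF j(2)] j
        by (simp add: chart_inv_def chart_def nth_append real_to_unit_unit_to_real)
    qed
  qed (simp add: p)
qed

lemma chart_chart_inv:
  assumes "z \<in> cylinder S (N - M)"
  shows "chart (chart_inv z) = z"
proof -
  obtain x y where z: "z = x @ y" "x \<in> S" "length y = N - M"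
    using assms by (auto simp: cylinder_def)
  have x: "length x = n" using z(2) S_lists by auto
  show ?thesis
  proof (rule nth_equalityI)
    show "length (chart (chart_inv z)) = length z" using x z(1,3) by simp
    fix k assume "k < length (chart (chart_inv z))"
    then have k: "k < n + (N - M)" by simp
    show "chart (chart_inv z) ! k = z ! k"
    proof (cases "k < n")
      case True
      then show ?thesis using rep_lt var_rep by (simp add: chart_def chart_inv_def nth_append)
    next
      case False
      define j where "j = k - n"
      have j: "k = n + j" "j < N - M" using False k by (auto simp: j_def)
      then show ?thesis
        by (simp add: chart_def chart_inv_def nth_append unit_to_real_real_to_unit)
    qed
  qed
qed

lemma bij_betw_chart: "bij_betw chart (copies N M var S) (cylinder S (N - M))"
  by (rule bij_betw_byWitness[where f'=chart_inv])
    (auto simp: chart_inv_chart chart_chart_inv chart_in_cylinder chart_inv_in_copies)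

lemma lcont_on_chart: "lcont_on (copies N M var S) chart"
proof (rule lcont_on_componentwise)
  fix k assume k: "k < n + (N - M)"
  have len: "\<And>p. p \<in> copies N M var S \<Longrightarrow> length p = N" by (simp add: copies_def)
  have unit: "\<And>p j. p \<in> copies N M var S \<Longrightarrow> j < N - M \<Longrightarrow> 0 < p ! (M + j) \<and> p ! (M + j) < 1"
    by (auto simp: copies_def)
  show "rcont_on (copies N M var S) (\<lambda>p. chart p ! k)"
  proof (cases "k < n")
    case True
    have "rcont_on (copies N M var S) (\<lambda>p. p ! rep k)"
      using rep_lt[OF True] M_le_N len by (intro rcont_on_nth) fastforce
    then show ?thesis using True by (simp add: chart_def nth_append)
  next
    case False
    then have j: "k - n < N - M" using k by simp
    have "rcont_on (copies N M var S) (\<lambda>p. unit_to_real (p ! (M + (k - n))))"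
      using j len unit isCont_unit_to_real
      by (intro rcont_on_compose_isCont[OF rcont_on_nth]) auto
    then show ?thesis using False j by (simp add: chart_def nth_append)
  qed
qed simp

lemma lcont_on_chart_inv: "lcont_on (cylinder S (N - M)) chart_inv"
proof (rule lcont_on_componentwise)
  have len: "\<And>z. z \<in> cylinder S (N - M) \<Longrightarrow> length z = n + (N - M)"
    using S_lists by (auto simp: cylinder_def)
  fix k assume k: "k < N"
  show "rcont_on (cylinder S (N - M)) (\<lambda>z. chart_inv z ! k)"
  proof (cases "k < M")
    case True
    have "rcont_on (cylinder S (N - M)) (\<lambda>z. z ! var k)"
      using var_lt[OF True] len by (intro rcont_on_nth) fastforce
    then show ?thesis using True by (simp add: chart_inv_def nth_append)
  next
    case False
    then have j: "k - M < N - M" using k by simp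
    have "rcont_on (cylinder S (N - M)) (\<lambda>z. real_to_unit (z ! (n + (k - M))))"
      using j len isCont_real_to_unit by (intro rcont_on_compose_isCont[OF rcont_on_nth]) auto
    then show ?thesis using False j by (simp add: chart_inv_def nth_append)
  qed
qed simp

definition chart_graph_eqs :: "real list set" where
  "chart_graph_eqs =
     {z. length z = N + (n + (N - M)) \<and> take n (drop N z) \<in> S \<and> (\<forall>k<M. z ! k = z ! (N + var k)) \<and>
         (\<forall>j<N - M. 0 < z ! (M + j) \<and> z ! (M + j) < 1 \<and>
            z ! (N + n + j) * (z ! (M + j) * (1 - z ! (M + j))) = 2 * z ! (M + j) - 1)}"

lemma graph_chart_subset: "{p @ chart p | p. p \<in> copies N M var S} \<subseteq> chart_graph_eqs"
proof
  fix z assume "z \<in> {p @ chart p | p. p \<in> copies N M var S}"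
  then obtain p where z: "z = p @ chart p" and p: "p \<in> copies N M var S" by blast
  from p show "z \<in> chart_graph_eqs"
  proof (elim copiesE)
    assume len: "length p = N" and x: "take n (chart p) \<in> S"
      and var: "\<And>k. k < M \<Longrightarrow> p ! k = take n (chart p) ! var k"
      and unit: "\<And>j. j < N - M \<Longrightarrow> 0 < p ! (M + j) \<and> p ! (M + j) < 1"
    have "z ! k = z ! (N + var k)" if "k < M" for k
      using var[OF that] var_lt[OF that] M_le_N that len by (simp add: z nth_append)
    moreover have "0 < z ! (M + j) \<and> z ! (M + j) < 1 \<and>
        z ! (N + n + j) * (z ! (M + j) * (1 - z ! (M + j))) = 2 * z ! (M + j) - 1"
      if "j < N - M" for j
    proof -
      have "unit_to_real (p ! (M + j)) * (p ! (M + j) * (1 - p ! (M + j))) = 2 * p ! (M + j) - 1"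
        using unit[OF that] unit_to_real_eq_iff by blast
      moreover have "M + j < N" using that by simp
      ultimately show ?thesis using that unit[OF that] len by (simp add: z nth_append chart_def)
    qed
    moreover have "length z = N + (n + (N - M))" "take n (drop N z) \<in> S"
      using len x by (simp_all add: z)
    ultimately show "z \<in> chart_graph_eqs" unfolding chart_graph_eqs_def by blast
  qed
qed

lemma take_eq_chart_inv_drop:
  assumes z: "z \<in> chart_graph_eqs"
  shows "take N z = chart_inv (drop N z)"
proof (rule nth_equalityI)
  show "length (take N z) = length (chart_inv (drop N z))"
    using z by (simp add: chart_graph_eqs_def)
  fix k assume "k < length (take N z)"
  then have k: "k < N" by simp
  show "take N z ! k = chart_inv (drop N z) ! k"
  proof (cases "k < M")
    case True
    then show ?thesis
      using z k var_lt[OF True] by (simp add: chart_graph_eqs_def chart_inv_def nth_append)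
  next
    case False
    define j where "j = k - M"
    have j: "k = M + j" "j < N - M" using False k by (auto simp: j_def)
    have unit: "0 < z ! (M + j)" "z ! (M + j) < 1"
      using z j(2) by (auto simp: chart_graph_eqs_def)
    then have "unit_to_real (z ! (M + j)) = z ! (N + n + j)"
      using z j(2) unit_to_real_eq_iff by (auto simp: chart_graph_eqs_def)
    then have "real_to_unit (z ! (N + n + j)) = z ! (M + j)"
      using real_to_unit_unit_to_real[OF unit] by simp
    then show ?thesis
      using j z by (simp add: chart_graph_eqs_def chart_inv_def nth_append add.assoc)
  qed
qed

lemma chart_graph_eqs_subset: "chart_graph_eqs \<subseteq> {p @ chart p | p. p \<in> copies N M var S}"
proof
  fix z assume z: "z \<in> chart_graph_eqs"
  define w where "w = drop N z"
  have w: "w \<in> cylinder S (N - M)"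
    unfolding cylinder_def
  proof (intro CollectI exI conjI)
    show "w = take n w @ drop n w" by simp
  qed (use z in \<open>simp_all add: w_def chart_graph_eqs_def\<close>)
  have "z = chart_inv w @ w"
    using take_eq_chart_inv_drop[OF z] unfolding w_def by (metis append_take_drop_id)
  also have "\<dots> = chart_inv w @ chart (chart_inv w)" by (simp add: chart_chart_inv[OF w])
  finally show "z \<in> {p @ chart p | p. p \<in> copies N M var S}"
    using chart_inv_in_copies[OF w] by blast
qed

lemma semialg_chart_graph_eqs:
  assumes "S \<in> semialg n"
  shows "chart_graph_eqs \<in> semialg (N + (n + (N - M)))"
proof -
  let ?L = "N + (n + (N - M))"
  have "{z. length z = ?L \<and> take n (drop N z) \<in> S} \<in> semialg ?L"
    by (rule semialg_preimage_take_drop[OF assms]) simp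
  moreover have "{z. length z = ?L \<and> (\<forall>k<M. z ! k = z ! (N + var k))} \<in> semialg ?L"
    using M_le_N by (intro semialg_all semialg_poly_fun_eq poly_fun_nth) (auto dest: var_lt)
  moreover have "{z. length z = ?L \<and> (\<forall>j<N - M. 0 < z ! (M + j) \<and> z ! (M + j) < 1 \<and>
      z ! (N + n + j) * (z ! (M + j) * (1 - z ! (M + j))) = 2 * z ! (M + j) - 1)} \<in> semialg ?L"
    by (intro semialg_all semialg_conj semialg_poly_fun_less semialg_poly_fun_eq
        poly_fun_diff poly_fun_mult poly_fun_const poly_fun_nth) auto
  ultimately show ?thesis unfolding chart_graph_eqs_def by (intro semialg_conj)
qed

lemma semialg_iso_copies:
  assumes "S \<in> semialg n"
  shows "semialg_iso N (copies N M var S) (n + (N - M)) (cylinder S (N - M))"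
proof -
  have "inv_into (copies N M var S) chart z = chart_inv z" if "z \<in> cylinder S (N - M)" for z
    using that by (intro inv_into_f_eq bij_betw_imp_inj_on[OF bij_betw_chart])
      (simp_all add: chart_inv_in_copies chart_chart_inv)
  then have "lcont_on (cylinder S (N - M)) (inv_into (copies N M var S) chart)"
    using lcont_on_chart_inv by (simp add: lcont_on_def)
  moreover have "cylinder S (N - M) \<subseteq> {y. length y = n + (N - M)}"
    using S_lists by (auto simp: cylinder_def)
  moreover have "{p @ chart p | p. p \<in> copies N M var S} = chart_graph_eqs"
    by (rule subset_antisym[OF graph_chart_subset chart_graph_eqs_subset])
  ultimately show ?thesis
    unfolding semialg_iso_def using bij_betw_chart lcont_on_chart semialg_chart_graph_eqs[OF assms]
    by (auto simp: copies_def)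
qed

lemma stably_iso_copies: "S \<in> semialg n \<Longrightarrow> stably_iso (N, copies N M var S) (n, S)"
  using si_trans[OF si_iso[OF semialg_iso_copies] stably_iso_cylinder] .

end

section \<open>Games paying only for strategy 1\<close>

definition mixed_value :: "nat \<Rightarrow> nat \<Rightarrow> ((nat \<Rightarrow> nat) \<Rightarrow> real) \<Rightarrow> real list \<Rightarrow> real" where
  "mixed_value N i \<phi> p = (\<Sum>s\<in>{s\<in>pure_profiles N. s i = 1}.
     \<phi> s * (\<Prod>k\<in>{..<N} - {i}. if s k = 1 then p ! k else 1 - p ! k))"

definition indiff_game :: "(nat \<Rightarrow> (nat \<Rightarrow> nat) \<Rightarrow> real) \<Rightarrow> nat \<Rightarrow> (nat \<Rightarrow> nat) \<Rightarrow> real" where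
  "indiff_game \<phi> i s = (if s i = 1 then \<phi> i s else 0)"

lemma tmne_indiff_game:
  "tmne N (indiff_game \<phi>) = {p. length p = N \<and> (\<forall>i<N. 0 < p ! i \<and> p ! i < 1) \<and>
     (\<forall>i<N. mixed_value N i (\<phi> i) p = 0)}"
proof -
  have "exp_payoff N (indiff_game \<phi>) i 1 p = mixed_value N i (\<phi> i) p" for i p
    unfolding exp_payoff_def mixed_value_def indiff_game_def by (rule sum.cong) auto
  moreover have "exp_payoff N (indiff_game \<phi>) i 0 p = 0" for i p
    unfolding exp_payoff_def indiff_game_def by (rule sum.neutral) auto
  ultimately show ?thesis unfolding tmne_def by simp
qed

lemma tmne_indiff_game_eq_copies:
  assumes interior: "\<forall>x\<in>S. \<forall>i<n. 0 < x ! i \<and> x ! i < 1" and var: "\<And>k. k < M \<Longrightarrow> var k < n"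
    and indifferent_iff: "\<And>p. length p = N \<Longrightarrow>
      (\<forall>q<N. mixed_value N q (\<phi> q) p = 0) \<longleftrightarrow> (\<exists>x\<in>S. \<forall>k<M. p ! k = x ! var k)"
  shows "tmne N (indiff_game \<phi>) = copies N M var S"
proof -
  have copies_eq: "copies N M var S = {p. length p = N \<and> (\<forall>i<N. 0 < p ! i \<and> p ! i < 1) \<and>
      (\<exists>x\<in>S. \<forall>k<M. p ! k = x ! var k)}" (is "_ = ?rhs")
  proof (intro equalityI subsetI)
    fix p assume p: "p \<in> copies N M var S"
    then have "\<forall>i<N. 0 < p ! i \<and> p ! i < 1" using copies_interior[OF interior var p] by blast
    with p show "p \<in> ?rhs" by (simp add: copies_def)
  qed (auto simp: copies_def)
  show ?thesis
    unfolding copies_eq tmne_indiff_game by (intro Collect_cong) (use indifferent_iff in blast)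
qed

definition plays_one :: "nat set \<Rightarrow> (nat \<Rightarrow> nat) \<Rightarrow> real" where
  "plays_one K s = (\<Prod>q\<in>K. if s q = 1 then 1 else 0)"

lemma pure_profiles_playing_one:
  assumes "i < N"
  shows "{s\<in>pure_profiles N. s i = 1} = PiE {..<N} (\<lambda>k. if k = i then {1} else {0, 1})"
proof (intro equalityI subsetI)
  fix s assume s: "s \<in> {s\<in>pure_profiles N. s i = 1}"
  have "s k \<in> (if k = i then {1} else {0, 1})" if "k < N" for k
    using s that by (cases "k = i") (auto simp: pure_profiles_def)
  then show "s \<in> PiE {..<N} (\<lambda>k. if k = i then {1} else {0, 1})"
    using s by (auto simp: pure_profiles_def PiE_iff)
next
  fix s :: "nat \<Rightarrow> nat" assume s: "s \<in> PiE {..<N} (\<lambda>k. if k = i then {1} else {0, 1})"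
  have "s k \<in> {0, 1}" if "k < N" for k
    using PiE_mem[OF s, of k] that by (auto split: if_splits)
  moreover have "s i = 1" using PiE_mem[OF s, of i] assms by simp
  ultimately show "s \<in> {s\<in>pure_profiles N. s i = 1}"
    using s by (auto simp: pure_profiles_def PiE_iff)
qed

lemma prod_restrict_subset:
  "finite A \<Longrightarrow> K \<subseteq> A \<Longrightarrow> (\<Prod>k\<in>A. if k \<in> K then f k else 1) = (\<Prod>k\<in>K. f k)"
  using prod.inter_restrict[of A f K] by (simp add: Int_absorb1)

lemma mixed_value_plays_one:
  assumes i: "i < N" and K: "K \<subseteq> {..<N} - {i}"
  shows "mixed_value N i (plays_one K) p = (\<Prod>q\<in>K. p ! q)"
proof -
  define w where "w k v = (if k = i then 1 else
      (if k \<in> K then (if v = 1 then 1 else 0) else 1) * (if v = 1 then p ! k else 1 - p ! k))"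
    for k and v :: nat
  have summand: "plays_one K s * (\<Prod>k\<in>{..<N} - {i}. if s k = 1 then p ! k else 1 - p ! k)
      = (\<Prod>k<N. w k (s k))" for s
  proof -
    have "plays_one K s = (\<Prod>k\<in>{..<N} - {i}. if k \<in> K then (if s k = 1 then 1 else 0) else 1)"
      unfolding plays_one_def using K by (simp add: prod_restrict_subset)
    moreover have "(\<Prod>k<N. w k (s k)) = (\<Prod>k\<in>{..<N} - {i}. w k (s k))"
      using i by (subst prod.remove[of _ i]) (auto simp: w_def)
    ultimately show ?thesis by (simp add: w_def prod.distrib)
  qed
  have "mixed_value N i (plays_one K) p
      = (\<Sum>s\<in>PiE {..<N} (\<lambda>k. if k = i then {1} else {0, 1}). \<Prod>k<N. w k (s k))"
    unfolding mixed_value_def pure_profiles_playing_one[OF i] summand ..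
  also have "\<dots> = (\<Prod>k<N. \<Sum>v\<in>(if k = i then {1} else {0, 1}). w k v)"
    by (rule prod_sum_PiE[symmetric]) auto
  also have "\<dots> = (\<Prod>k<N. if k \<in> K then p ! k else 1)"
    using K by (intro prod.cong) (auto simp: w_def)
  also have "\<dots> = (\<Prod>q\<in>K. p ! q)"
    using K by (intro prod_restrict_subset) auto
  finally show ?thesis .
qed

lemma mixed_value_sum:
  "mixed_value N i (\<lambda>s. \<Sum>a\<in>A. c a * \<phi> a s) p = (\<Sum>a\<in>A. c a * mixed_value N i (\<phi> a) p)"
  unfolding mixed_value_def
  by (simp add: sum_distrib_left sum_distrib_right sum.swap[of _ A] mult.assoc)

lemma mixed_value_diff:
  "mixed_value N i (\<lambda>s. \<phi> s - \<psi> s) p = mixed_value N i \<phi> p - mixed_value N i \<psi> p"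
  unfolding mixed_value_def by (simp add: left_diff_distrib sum_subtractf)

section \<open>Blocks of players\<close>

definition block_of :: "(nat \<Rightarrow> nat) \<Rightarrow> nat \<Rightarrow> nat" where
  "block_of d k = (LEAST i. k < sum d {..<Suc i})"

lemma block_of_eq:
  assumes "sum d {..<i} \<le> k" "k < sum d {..<Suc i}"
  shows "block_of d k = i"
  unfolding block_of_def
proof (rule Least_equality)
  show "k < sum d {..<Suc i}" by fact
  fix j assume j: "k < sum d {..<Suc j}"
  show "i \<le> j"
  proof (rule ccontr)
    assume "\<not> i \<le> j"
    then have "sum d {..<Suc j} \<le> sum d {..<i}" by (intro sum_mono2) auto
    then show False using assms(1) j by linarith
  qed
qed

lemma block_of_offset: "t < d i \<Longrightarrow> block_of d (sum d {..<i} + t) = i"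
  by (rule block_of_eq) auto

lemma offset_less_sum:
  fixes d :: "nat \<Rightarrow> nat"
  assumes "i < n" "t < d i"
  shows "sum d {..<i} + t < sum d {..<n}"
proof -
  have "sum d {..<Suc i} \<le> sum d {..<n}" using assms(1) by (intro sum_mono2) auto
  then show ?thesis using assms(2) by simp
qed

lemma block_of_bounds:
  assumes "k < sum d {..<n}"
  shows "block_of d k < n" "sum d {..<block_of d k} \<le> k" "k < sum d {..<Suc (block_of d k)}"
proof -
  have n: "k < sum d {..<Suc (n - 1)}" using assms by (cases n) auto
  show "k < sum d {..<Suc (block_of d k)}"
    unfolding block_of_def by (rule LeastI[of "\<lambda>i. k < sum d {..<Suc i}", OF n])
  have "block_of d k \<le> n - 1"
    unfolding block_of_def by (rule Least_le[of "\<lambda>i. k < sum d {..<Suc i}", OF n])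
  then show "block_of d k < n" using assms by (cases n) auto
  show "sum d {..<block_of d k} \<le> k"
  proof (cases "block_of d k")
    case (Suc j)
    then have "\<not> k < sum d {..<Suc j}"
      unfolding block_of_def by (metis lessI not_less_Least)
    then show ?thesis using Suc by simp
  qed simp
qed

definition block_copies :: "(nat \<Rightarrow> nat) \<Rightarrow> nat \<Rightarrow> real list \<Rightarrow> real list \<Rightarrow> bool" where
  "block_copies d n x p \<longleftrightarrow> (\<forall>i<n. \<forall>t<d i. p ! (sum d {..<i} + t) = x ! i)"

lemma block_copies_iff:
  "block_copies d n x p \<longleftrightarrow> (\<forall>k<sum d {..<n}. p ! k = x ! block_of d k)"
proof
  assume copies: "block_copies d n x p"
  show "\<forall>k<sum d {..<n}. p ! k = x ! block_of d k"
  proof (intro allI impI)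
    fix k assume k: "k < sum d {..<n}"
    define i where "i = block_of d k"
    have "i < n" "k = sum d {..<i} + (k - sum d {..<i})" "k - sum d {..<i} < d i"
      using block_of_bounds[OF k] by (auto simp: i_def)
    then show "p ! k = x ! block_of d k" using copies unfolding block_copies_def i_def by metis
  qed
qed (auto simp: block_copies_def offset_less_sum block_of_offset)

lemma block_copies_of_ties:
  fixes d :: "nat \<Rightarrow> nat"
  assumes tie: "\<And>k. Suc k < sum d {..<n} \<Longrightarrow> block_of d k = block_of d (Suc k) \<Longrightarrow> p ! k = p ! Suc k"
  shows "block_copies d n (map (\<lambda>i. p ! sum d {..<i}) [0..<n]) p"
proof -
  have "p ! (sum d {..<i} + t) = p ! sum d {..<i}" if "i < n" "t < d i" for i t
    using that(2)
  proof (induction t)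
    case (Suc t)
    then show ?case
      using tie[of "sum d {..<i} + t"] offset_less_sum[of i n "Suc t" d] that(1)
        block_of_offset[of t d i] block_of_offset[of "Suc t" d i] by simp
  qed simp
  then show ?thesis by (simp add: block_copies_def)
qed

definition block_slots :: "(nat \<Rightarrow> nat) \<Rightarrow> nat \<Rightarrow> (nat \<Rightarrow> nat) \<Rightarrow> nat set" where
  "block_slots d n a = (\<lambda>(i, t). sum d {..<i} + t) ` (SIGMA i:{..<n}. {..<a i})"

text \<open>The multilinear lift of a polynomial \<open>c\<close> to the players of the blocks: the monomial
  \<open>x\<^sup>a\<close> becomes the event that the first \<open>a i\<close> players of every block \<open>i\<close> play 1.\<close>

definition lifted_payoff :: "mpoly \<Rightarrow> (nat \<Rightarrow> nat) \<Rightarrow> nat \<Rightarrow> (nat \<Rightarrow> nat) \<Rightarrow> real" where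
  "lifted_payoff c d n s = (\<Sum>a\<in>{a. c a \<noteq> 0}. c a * plays_one (block_slots d n a) s)"

lemma block_slots_subset:
  "(\<And>i. i < n \<Longrightarrow> a i \<le> d i) \<Longrightarrow> block_slots d n a \<subseteq> {..<sum d {..<n}}"
  unfolding block_slots_def using offset_less_sum by fastforce

lemma prod_block_slots:
  assumes a: "\<And>i. i < n \<Longrightarrow> a i \<le> d i" and x: "block_copies d n x p" "length x = n"
  shows "(\<Prod>q\<in>block_slots d n a. p ! q) = monom_eval a x"
proof -
  have "inj_on (\<lambda>(i, t). sum d {..<i} + t) (SIGMA i:{..<n}. {..<a i})"
  proof (rule inj_onI, clarsimp)
    fix i t i' t'
    assume "i < n" "t < a i" "i' < n" "t' < a i'" and eq: "sum d {..<i} + t = sum d {..<i'} + t'"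
    then have "t < d i" "t' < d i'" using a[of i] a[of i'] by linarith+
    then have "block_of d (sum d {..<i} + t) = i" "block_of d (sum d {..<i'} + t') = i'"
      by (simp_all add: block_of_offset)
    then show "i = i' \<and> t = t'" using eq by auto
  qed
  then have "(\<Prod>q\<in>block_slots d n a. p ! q)
      = (\<Prod>(i, t)\<in>(SIGMA i:{..<n}. {..<a i}). p ! (sum d {..<i} + t))"
    unfolding block_slots_def by (subst prod.reindex) (simp_all add: case_prod_beta comp_def)
  also have "\<dots> = (\<Prod>i<n. \<Prod>t<a i. p ! (sum d {..<i} + t))"
    by (rule prod.Sigma[symmetric]) auto
  also have "\<dots> = (\<Prod>i<n. \<Prod>t<a i. x ! i)"
  proof (intro prod.cong refl)
    fix i t assume "i \<in> {..<n}" "t \<in> {..<a i}"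
    then have "i < n" "t < d i" using a[of i] by auto
    then show "p ! (sum d {..<i} + t) = x ! i" using x(1) by (simp add: block_copies_def)
  qed
  also have "\<dots> = monom_eval a x" by (simp add: monom_eval_def x(2))
  finally show ?thesis .
qed

lemma mixed_value_lifted_payoff:
  assumes "finite {a. c a \<noteq> 0}" and deg: "\<And>a i. c a \<noteq> 0 \<Longrightarrow> i < n \<Longrightarrow> a i \<le> d i"
    and q: "sum d {..<n} \<le> q" "q < N" and x: "block_copies d n x p" "length x = n"
  shows "mixed_value N q (lifted_payoff c d n) p = peval c x"
proof -
  have "mixed_value N q (plays_one (block_slots d n a)) p = monom_eval a x" if "c a \<noteq> 0" for a
  proof -
    have "block_slots d n a \<subseteq> {..<N} - {q}"
      using block_slots_subset[of n a d] deg[OF that] q by auto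
    then show ?thesis
      using q prod_block_slots[OF deg[OF that] x] by (simp add: mixed_value_plays_one)
  qed
  then show ?thesis
    unfolding lifted_payoff_def mixed_value_sum peval_eq_sum_monom_eval by simp
qed

section \<open>Games realising a variety\<close>

lemma three_le_sum_if_long_block:
  fixes d :: "nat \<Rightarrow> nat"
  assumes pos: "\<And>i. i < n \<Longrightarrow> 0 < d i" and not_short: "\<not> (n = 1 \<and> sum d {..<n} = 2)"
    and tie: "Suc k < sum d {..<n}" "block_of d k = block_of d (Suc k)"
  shows "3 \<le> sum d {..<n}"
proof -
  define i where "i = block_of d k"
  have i: "i < n" "2 \<le> d i"
    using block_of_bounds[of k d n] block_of_bounds[of "Suc k" d n] tie by (auto simp: i_def)
  have "card ({..<n} - {i}) = (\<Sum>j\<in>{..<n} - {i}. 1)" by simp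
  also have "\<dots> \<le> sum d ({..<n} - {i})" using pos by (intro sum_mono) (simp add: Suc_le_eq)
  finally have "card ({..<n} - {i}) \<le> sum d ({..<n} - {i})" .
  moreover have "sum d {..<n} = d i + sum d ({..<n} - {i})"
    using i(1) by (simp add: sum.remove)
  ultimately have "n + 1 \<le> sum d {..<n}" using i by simp
  then show ?thesis using not_short i by linarith
qed

text \<open>The blocks of lengths \<open>d 0, \<dots>, d (n - 1)\<close> are laid out consecutively, of total
  length \<open>D\<close>. Player \<open>q < D\<close> ties together its successors \<open>k = q + 1\<close> and \<open>k + 1\<close> (modulo \<open>D\<close>,
  so that \<open>q\<close> is neither of them once \<open>D \<ge> 3\<close>) when they lie in the same block; player \<open>D + j\<close>
  imposes the equation \<open>F j\<close> on the block values.\<close>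

definition block_game :: "(nat \<Rightarrow> nat) \<Rightarrow> nat \<Rightarrow> (nat \<Rightarrow> mpoly) \<Rightarrow> nat \<Rightarrow> (nat \<Rightarrow> nat) \<Rightarrow> real" where
  "block_game d n F q s =
     (let D = sum d {..<n}; k = (if Suc q = D then 0 else Suc q) in
      if q < D then
        (if Suc k < D \<and> block_of d k = block_of d (Suc k)
         then plays_one {k} s - plays_one {Suc k} s else 0)
      else lifted_payoff (F (q - D)) d n s)"

lemma mixed_value_block_game_tie:
  fixes d :: "nat \<Rightarrow> nat"
  assumes pos: "\<And>i. i < n \<Longrightarrow> 0 < d i" and not_short: "\<not> (n = 1 \<and> sum d {..<n} = 2)"
    and q: "q < sum d {..<n}" "sum d {..<n} \<le> N"
    and k: "k = (if Suc q = sum d {..<n} then 0 else Suc q)"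
  shows "mixed_value N q (block_game d n F q) p =
    (if Suc k < sum d {..<n} \<and> block_of d k = block_of d (Suc k) then p ! k - p ! Suc k else 0)"
proof (cases "Suc k < sum d {..<n} \<and> block_of d k = block_of d (Suc k)")
  case True
  then have "3 \<le> sum d {..<n}" using three_le_sum_if_long_block[OF pos not_short] by blast
  then have "q \<noteq> k" "q \<noteq> Suc k" using k by (cases "Suc q = sum d {..<n}", simp_all)+
  moreover have "block_game d n F q = (\<lambda>s. plays_one {k} s - plays_one {Suc k} s)"
    using True q unfolding fun_eq_iff block_game_def Let_def k[symmetric] by simp
  ultimately show ?thesis
    using True q by (simp add: mixed_value_diff mixed_value_plays_one)
next
  case False
  then have "block_game d n F q = (\<lambda>s. 0)"
    using q unfolding fun_eq_iff block_game_def Let_def k[symmetric] by auto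
  then show ?thesis using False by (auto simp: mixed_value_def)
qed

lemma mixed_value_block_game_equation:
  fixes d :: "nat \<Rightarrow> nat"
  assumes "is_poly n (F j)" and deg: "\<And>a i. F j a \<noteq> 0 \<Longrightarrow> i < n \<Longrightarrow> a i \<le> d i"
    and "sum d {..<n} + j < N" and "block_copies d n x p" "length x = n"
  shows "mixed_value N (sum d {..<n} + j) (block_game d n F (sum d {..<n} + j)) p = peval (F j) x"
proof -
  have "block_game d n F (sum d {..<n} + j) = lifted_payoff (F j) d n"
    by (simp add: block_game_def Let_def fun_eq_iff)
  then show ?thesis
    using assms by (simp add: mixed_value_lifted_payoff is_poly_def)
qed

lemma block_copies_if_block_game_indifferent:
  fixes d :: "nat \<Rightarrow> nat"
  assumes polys: "\<forall>j<m. is_poly n (F j)"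
    and deg: "\<forall>j<m. \<forall>a. F j a \<noteq> 0 \<longrightarrow> (\<forall>i<n. a i \<le> d i)"
    and pos: "\<And>i. i < n \<Longrightarrow> 0 < d i" and not_short: "\<not> (n = 1 \<and> sum d {..<n} = 2)"
    and N: "N = sum d {..<n} + m"
    and indiff: "\<forall>q<N. mixed_value N q (block_game d n F q) p = 0"
  shows "\<exists>x\<in>zero_set n m F. block_copies d n x p"
proof -
  let ?D = "sum d {..<n}"
  have tie: "p ! k = p ! Suc k" if "Suc k < ?D" "block_of d k = block_of d (Suc k)" for k
  proof -
    define q where "q = (if k = 0 then ?D - 1 else k - 1)"
    have q: "q < ?D" "k = (if Suc q = ?D then 0 else Suc q)" using that by (auto simp: q_def)
    then have "mixed_value N q (block_game d n F q) p = p ! k - p ! Suc k"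
      using mixed_value_block_game_tie[OF pos not_short q(1) _ q(2)] that N by simp
    moreover have "mixed_value N q (block_game d n F q) p = 0" using indiff q(1) N by simp
    ultimately show ?thesis by simp
  qed
  define x where "x = map (\<lambda>i. p ! sum d {..<i}) [0..<n]"
  have x: "block_copies d n x p" "length x = n"
    using block_copies_of_ties[of d n p] tie by (simp_all add: x_def)
  have "peval (F j) x = 0" if "j < m" for j
    using mixed_value_block_game_equation[of n F j d N x p] polys deg x indiff that N by simp
  then show ?thesis using x by (auto simp: zero_set_def)
qed

lemma block_game_indifferent_if_block_copies:
  fixes d :: "nat \<Rightarrow> nat"
  assumes polys: "\<forall>j<m. is_poly n (F j)"
    and deg: "\<forall>j<m. \<forall>a. F j a \<noteq> 0 \<longrightarrow> (\<forall>i<n. a i \<le> d i)"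
    and pos: "\<And>i. i < n \<Longrightarrow> 0 < d i" and not_short: "\<not> (n = 1 \<and> sum d {..<n} = 2)"
    and N: "N = sum d {..<n} + m"
    and x: "x \<in> zero_set n m F" "block_copies d n x p" and q: "q < N"
  shows "mixed_value N q (block_game d n F q) p = 0"
proof (cases "q < sum d {..<n}")
  case True
  define k where "k = (if Suc q = sum d {..<n} then 0 else Suc q)"
  have "p ! k = p ! Suc k" if "Suc k < sum d {..<n}" "block_of d k = block_of d (Suc k)"
    using x(2) that by (simp add: block_copies_iff)
  then show ?thesis using mixed_value_block_game_tie[OF pos not_short True _ k_def, of N F p] N
    by simp
next
  case False
  define j where "j = q - sum d {..<n}"
  have "q = sum d {..<n} + j" "j < m" using False q N by (auto simp: j_def)
  then show ?thesis
    using mixed_value_block_game_equation[of n F j d N x p] polys deg x q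
    by (auto simp: zero_set_def)
qed

lemma tmne_block_game:
  fixes d :: "nat \<Rightarrow> nat"
  assumes polys: "\<forall>j<m. is_poly n (F j)"
    and deg: "\<forall>j<m. \<forall>a. F j a \<noteq> 0 \<longrightarrow> (\<forall>i<n. a i \<le> d i)"
    and pos: "\<And>i. i < n \<Longrightarrow> 0 < d i" and not_short: "\<not> (n = 1 \<and> sum d {..<n} = 2)"
    and N: "N = sum d {..<n} + m"
    and interior: "\<forall>x\<in>zero_set n m F. \<forall>i<n. 0 < x ! i \<and> x ! i < 1"
  shows "tmne N (indiff_game (block_game d n F)) =
    copies N (sum d {..<n}) (block_of d) (zero_set n m F)"
proof (rule tmne_indiff_game_eq_copies[OF interior])
  show "block_of d k < n" if "k < sum d {..<n}" for k using that by (rule block_of_bounds)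
  show "(\<forall>q<N. mixed_value N q (block_game d n F q) p = 0) \<longleftrightarrow>
      (\<exists>x\<in>zero_set n m F. \<forall>k<sum d {..<n}. p ! k = x ! block_of d k)" for p
    unfolding block_copies_iff[symmetric]
    using block_copies_if_block_game_indifferent[OF polys deg pos not_short N]
      block_game_indifferent_if_block_copies[OF polys deg pos not_short N] by blast
qed

text \<open>For a single variable of degree two the block consists of the players 0 and 1 only,
  and no third block player is left to tie them together; instead the first equation player 2
  serves as a third copy of the variable.\<close>

definition quadratic_game :: "(nat \<Rightarrow> mpoly) \<Rightarrow> nat \<Rightarrow> (nat \<Rightarrow> nat) \<Rightarrow> real" where
  "quadratic_game F q s =
     (if q = 0 then plays_one {2} s - plays_one {1} s
      else if q = 1 then plays_one {2} s - plays_one {0} s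
      else lifted_payoff (F (q - 2)) (\<lambda>_. 2) 1 s)"

lemma mixed_value_quadratic_game:
  assumes polys: "\<forall>j<m. is_poly 1 (F j)" and deg: "\<forall>j<m. \<forall>a. F j a \<noteq> 0 \<longrightarrow> a 0 \<le> 2"
    and m: "0 < m"
  shows mixed_value_quadratic_game_0:
      "mixed_value (2 + m) 0 (quadratic_game F 0) p = p ! 2 - p ! 1"
    and mixed_value_quadratic_game_1:
      "mixed_value (2 + m) 1 (quadratic_game F 1) p = p ! 2 - p ! 0"
    and mixed_value_quadratic_game_equation: "j < m \<Longrightarrow> p ! 1 = p ! 0 \<Longrightarrow>
      mixed_value (2 + m) (2 + j) (quadratic_game F (2 + j)) p = peval (F j) [p ! 0]"
proof -
  have "quadratic_game F 0 = (\<lambda>s. plays_one {2} s - plays_one {1} s)"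
    "quadratic_game F 1 = (\<lambda>s. plays_one {2} s - plays_one {0} s)"
    by (simp_all add: quadratic_game_def fun_eq_iff)
  then show "mixed_value (2 + m) 0 (quadratic_game F 0) p = p ! 2 - p ! 1"
    "mixed_value (2 + m) 1 (quadratic_game F 1) p = p ! 2 - p ! 0"
    using m by (simp_all add: mixed_value_diff mixed_value_plays_one)
  assume j: "j < m" and tie: "p ! 1 = p ! 0"
  have copies: "block_copies (\<lambda>_. 2) 1 [p ! 0] p"
    using tie by (auto simp: block_copies_def less_2_cases_iff)
  have "mixed_value (2 + m) (2 + j) (lifted_payoff (F j) (\<lambda>_. 2) 1) p = peval (F j) [p ! 0]"
    by (rule mixed_value_lifted_payoff) (use polys deg j copies in \<open>auto simp: is_poly_def\<close>)
  moreover have "quadratic_game F (2 + j) = lifted_payoff (F j) (\<lambda>_. 2) 1"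
    by (simp add: quadratic_game_def fun_eq_iff)
  ultimately show "mixed_value (2 + m) (2 + j) (quadratic_game F (2 + j)) p = peval (F j) [p ! 0]"
    by simp
qed

lemma quadratic_game_indifferent_iff:
  assumes "\<forall>j<m. is_poly 1 (F j)" "\<forall>j<m. \<forall>a. F j a \<noteq> 0 \<longrightarrow> a 0 \<le> 2" "0 < m"
  shows "(\<forall>q<2 + m. mixed_value (2 + m) q (quadratic_game F q) p = 0) \<longleftrightarrow>
    (\<exists>x\<in>zero_set 1 m F. \<forall>k<3. p ! k = x ! 0)"
proof
  assume indiff: "\<forall>q<2 + m. mixed_value (2 + m) q (quadratic_game F q) p = 0"
  then have ties: "p ! 1 = p ! 0" "p ! 2 = p ! 0"
    using mixed_value_quadratic_game_0[OF assms, of p]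
      mixed_value_quadratic_game_1[OF assms, of p]
    by force+
  have "peval (F j) [p ! 0] = 0" if "j < m" for j
    using mixed_value_quadratic_game_equation[OF assms that ties(1)]
      indiff[rule_format, of "2 + j"] that by simp
  then have "[p ! 0] \<in> zero_set 1 m F" by (simp add: zero_set_def)
  moreover have "\<forall>k<3. p ! k = [p ! 0] ! 0"
    using ties by (auto simp: numeral_3_eq_3 numeral_2_eq_2 less_Suc_eq)
  ultimately show "\<exists>x\<in>zero_set 1 m F. \<forall>k<3. p ! k = x ! 0" by blast
next
  assume "\<exists>x\<in>zero_set 1 m F. \<forall>k<3. p ! k = x ! 0"
  then obtain x where x: "x \<in> zero_set 1 m F" and copies: "\<forall>k<3. p ! k = x ! 0" by blast
  then have x_eq: "x = [p ! 0]" by (cases x) (auto simp: zero_set_def)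
  have ties: "p ! 1 = p ! 0" "p ! 2 = p ! 0" using copies by auto
  show "\<forall>q<2 + m. mixed_value (2 + m) q (quadratic_game F q) p = 0"
  proof (intro allI impI)
    fix q assume q: "q < 2 + m"
    show "mixed_value (2 + m) q (quadratic_game F q) p = 0"
    proof (cases "q < 2")
      case True
      then show ?thesis
        using mixed_value_quadratic_game_0[OF assms] mixed_value_quadratic_game_1[OF assms] ties
        by (auto simp: less_2_cases_iff)
    next
      case False
      define j where "j = q - 2"
      have "q = 2 + j" "j < m" using False q by (auto simp: j_def)
      then show ?thesis
        using mixed_value_quadratic_game_equation[OF assms _ ties(1)] x x_eq
        by (simp add: zero_set_def)
    qed
  qed
qed

lemma tmne_quadratic_game:
  assumes "\<forall>j<m. is_poly 1 (F j)" "\<forall>j<m. \<forall>a. F j a \<noteq> 0 \<longrightarrow> a 0 \<le> 2" "0 < m"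
    and interior: "\<forall>x\<in>zero_set 1 m F. 0 < x ! 0 \<and> x ! 0 < 1"
  shows "tmne (2 + m) (indiff_game (quadratic_game F)) =
    copies (2 + m) 3 (\<lambda>_. 0) (zero_set 1 m F)"
  using interior
  by (intro tmne_indiff_game_eq_copies[where n = 1] quadratic_game_indifferent_iff[OF assms(1-3)])
    auto

lemma tmne_indiff_game_one:
  assumes "0 < N"
  shows "tmne N (indiff_game (\<lambda>_ _. 1)) = {}"
proof -
  have "mixed_value N 0 (plays_one {}) p = 1" for p
    using assms by (simp add: mixed_value_plays_one)
  moreover have "plays_one {} = (\<lambda>_. 1)" by (simp add: plays_one_def fun_eq_iff)
  ultimately show ?thesis using assms by (auto simp: tmne_indiff_game)
qed

definition max_deg :: "nat \<Rightarrow> (nat \<Rightarrow> mpoly) \<Rightarrow> nat \<Rightarrow> nat" where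
  "max_deg m F i = Max (insert 0 {deg_in (F j) i | j. j < m})"

lemma exponent_le_max_deg:
  assumes "is_poly n (F j)" "j < m" "F j a \<noteq> 0"
  shows "a i \<le> max_deg m F i"
proof -
  have "{a i | a. F j a \<noteq> 0} = (\<lambda>a. a i) ` {a. F j a \<noteq> 0}" by blast
  then have "finite (insert 0 {a i | a. F j a \<noteq> 0})" using assms(1) by (simp add: is_poly_def)
  moreover have "a i \<in> insert 0 {a i | a. F j a \<noteq> 0}" using assms(3) by blast
  ultimately have "a i \<le> deg_in (F j) i" unfolding deg_in_def by (rule Max_ge)
  have "{deg_in (F j) i | j. j < m} = (\<lambda>j. deg_in (F j) i) ` {..<m}" by blast
  then have "finite (insert 0 {deg_in (F j) i | j. j < m})" by simp
  moreover have "deg_in (F j) i \<in> insert 0 {deg_in (F j) i | j. j < m}" using assms(2) by blast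
  ultimately have "deg_in (F j) i \<le> max_deg m F i" unfolding max_deg_def by (rule Max_ge)
  with \<open>a i \<le> deg_in (F j) i\<close> show ?thesis by simp
qed

lemma max_deg_pos:
  assumes polys: "\<forall>j<m. is_poly n (F j)" and pos: "\<forall>x\<in>zero_set n m F. \<forall>i<n. 0 < x ! i"
    and x: "x \<in> zero_set n m F" and i: "i < n"
  shows "0 < max_deg m F i"
proof (rule ccontr)
  assume "\<not> 0 < max_deg m F i"
  then have absent: "a i = 0" if "j < m" "F j a \<noteq> 0" for j a
    using exponent_le_max_deg[of n F j m a i] polys that by simp
  have "peval (F j) (x[i := -1]) = peval (F j) x" if "j < m" for j
    by (rule peval_list_update_absent) (rule absent[OF that])
  then have "x[i := -1] \<in> zero_set n m F" using x by (simp add: zero_set_def)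
  then have "0 < x[i := -1] ! i" using pos i by blast
  moreover have "x[i := -1] ! i = -1" using x i by (simp add: zero_set_def)
  ultimately show False by simp
qed

lemma num_equations_pos:
  assumes inside: "\<forall>x\<in>zero_set n m F. (\<forall>i<n. 0 < x ! i) \<and> sum_list x < 1"
    and "0 < n \<or> zero_set n m F = {}"
  shows "0 < m"
proof (rule ccontr)
  assume "\<not> 0 < m"
  then have origin: "replicate n 0 \<in> zero_set n m F" by (simp add: zero_set_def)
  from assms(2) show False
  proof
    assume "0 < n"
    moreover have "0 < replicate n (0 :: real) ! 0" using inside origin \<open>0 < n\<close> by blast
    ultimately show False by simp
  qed (use origin in simp)
qed

lemma zero_set_in_unit_cube:
  assumes inside: "\<forall>x\<in>zero_set n m F. (\<forall>i<n. 0 < x ! i) \<and> sum_list x < 1"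
  shows "\<forall>x\<in>zero_set n m F. \<forall>i<n. 0 < x ! i \<and> x ! i < 1"
proof (intro ballI allI impI)
  fix x i assume x: "x \<in> zero_set n m F" and i: "i < n"
  then have len: "length x = n" by (simp add: zero_set_def)
  have pos: "\<forall>i<n. 0 < x ! i" "sum_list x < 1" using inside x by auto
  have "x ! i \<le> (\<Sum>k<n. x ! k)"
    using pos(1) i by (intro member_le_sum) (auto intro: less_imp_le)
  also have "\<dots> = sum_list x" using len by (simp add: sum_list_sum_nth atLeast0LessThan)
  finally show "0 < x ! i \<and> x ! i < 1" using pos i by simp
qed

lemma game_with_tmne_copies:
  assumes polys: "\<forall>j<m. is_poly n (F j)"
    and inside: "\<forall>x\<in>zero_set n m F. (\<forall>i<n. 0 < x ! i) \<and> sum_list x < 1"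
    and nonempty: "x \<in> zero_set n m F"
  defines "N \<equiv> (\<Sum>i<n. max_deg m F i) + m"
  shows "\<exists>u M var rep. copy_pattern N M n var rep (zero_set n m F) \<and>
    tmne N u = copies N M var (zero_set n m F)"
proof -
  define d where "d = max_deg m F"
  have deg: "\<forall>j<m. \<forall>a. F j a \<noteq> 0 \<longrightarrow> (\<forall>i<n. a i \<le> d i)"
    using exponent_le_max_deg polys by (auto simp: d_def)
  have pos: "\<And>i. i < n \<Longrightarrow> 0 < d i"
    using max_deg_pos[OF polys _ nonempty] inside by (simp add: d_def)
  have interior: "\<forall>x\<in>zero_set n m F. \<forall>i<n. 0 < x ! i \<and> x ! i < 1"
    by (rule zero_set_in_unit_cube[OF inside])
  have S_lists: "zero_set n m F \<subseteq> {x. length x = n}" by (auto simp: zero_set_def)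
  show ?thesis
  proof (cases "n = 1 \<and> sum d {..<n} = 2")
    case True
    then have n: "n = 1" and d: "d 0 = 2" by auto
    then have N: "N = 2 + m" and m: "0 < m"
      using num_equations_pos[OF inside] by (simp_all add: N_def d_def)
    have "copy_pattern N 3 n (\<lambda>_. 0) (\<lambda>_. 0) (zero_set n m F)"
      using n m S_lists by unfold_locales (auto simp: N)
    moreover have "tmne N (indiff_game (quadratic_game F)) = copies N 3 (\<lambda>_. 0) (zero_set n m F)"
      unfolding N n using polys deg interior m d n by (intro tmne_quadratic_game) auto
    ultimately show ?thesis by blast
  next
    case False
    have "copy_pattern N (sum d {..<n}) n (block_of d) (\<lambda>i. sum d {..<i}) (zero_set n m F)"
      using pos S_lists offset_less_sum[of _ n 0 d] block_of_offset[of 0 d]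
      by unfold_locales (auto simp: N_def d_def block_of_bounds)
    moreover have "tmne N (indiff_game (block_game d n F)) =
        copies N (sum d {..<n}) (block_of d) (zero_set n m F)"
      using tmne_block_game[OF polys deg pos False _ interior] by (simp add: N_def d_def)
    ultimately show ?thesis by blast
  qed
qed

theorem theorem6:
  fixes n m :: nat and F :: "nat \<Rightarrow> mpoly"
  assumes polys: "\<forall>j<m. is_poly n (F j)"
    and inside: "\<forall>x\<in>zero_set n m F. (\<forall>i<n. 0 < x ! i) \<and> sum_list x < 1"
  shows "\<exists>u :: nat \<Rightarrow> (nat \<Rightarrow> nat) \<Rightarrow> real.
           stably_iso
             ((\<Sum>i<n. Max (insert 0 {deg_in (F j) i | j. j < m})) + m,
              tmne ((\<Sum>i<n. Max (insert 0 {deg_in (F j) i | j. j < m})) + m) u)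
             (n, zero_set n m F)"
proof -
  let ?N = "(\<Sum>i<n. max_deg m F i) + m"
  have N: "(\<Sum>i<n. Max (insert 0 {deg_in (F j) i | j. j < m})) + m = ?N"
    by (simp add: max_deg_def)
  show ?thesis
  proof (cases "zero_set n m F = {}")
    case True
    then have "tmne ?N (indiff_game (\<lambda>_ _. 1)) = {}"
      using num_equations_pos[OF inside] by (intro tmne_indiff_game_one) simp
    moreover have "semialg_iso ?N {} n {}"
      by (auto simp: semialg_iso_def lcont_on_def semialg_empty)
    ultimately show ?thesis unfolding N using True si_iso by metis
  next
    case False
    then obtain u M var rep where "copy_pattern ?N M n var rep (zero_set n m F)"
      and "tmne ?N u = copies ?N M var (zero_set n m F)"
      using game_with_tmne_copies[OF polys inside] by blast
    then show ?thesis
      unfolding N using copy_pattern.stably_iso_copies zero_set_semialg[OF polys] by metis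
  qed
qed

end
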